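(* Let $M$ be a smooth manifold, let $\nabla$ be an affine connection on $M$, and let $\hat J_1,\hat J_2$ be generalized almost product structures on $M$ (i.e. bundle endomorphisms of $TM\oplus T^*M$ with $\hat J_1^2=\hat J_2^2=I$) such that $\hat J_1\hat J_2=-\hat J_2\hat J_1$, and put $\hat J:=\hat J_1\hat J_2$, so that $(\hat J_1,\hat J_2,\hat J)$ is a generalized almost para-quaternionic structure. Let $V_1$ and $V_2$ be the $+1$- and $-1$-eigenbundles of $\hat J_1$. Then there exists a unique generalized affine connection $D$ on $M$ such that (i) $D\hat J_1=D\hat J_2=D\hat J=0$; (ii) $T^D(\sigma,\tau)=0$ for every $\sigma\in\Gamma^\infty(V_1)$ and every $\tau\in\Gamma^\infty(V_2)$, where $T^D(\sigma,\tau):=D_\sigma\tau-D_\tau\sigma-[\sigma,\tau]_\nabla$.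
   Context: The $\nabla$-bracket on $\Gamma^\infty(TM\oplus T^*M)$ is $[X+\eta,Y+\beta]_\nabla:=[X,Y]+\nabla_X\beta-\nabla_Y\eta$ for vector fields $X,Y$ and 1-forms $\eta,\beta$ (with $\nabla$ acting on 1-forms as the induced connection). A generalized affine connection on $M$ is an $\mathbb R$-bilinear map $D:\Gamma^\infty(TM\oplus T^*M)\times\Gamma^\infty(TM\oplus T^*M)\to\Gamma^\infty(TM\oplus T^*M)$ with $D_{f\sigma}\tau=fD_\sigma\tau$ and $D_\sigma(f\tau)=\sigma(f)\tau+fD_\sigma\tau$ for $f\in C^\infty(M)$, where $(X+\eta)(f):=X(f)$. For an endomorphism $\hat K$, $(D_\sigma\hat K)\tau:=D_\sigma(\hat K\tau)-\hat K(D_\sigma\tau)$. This $D$ is called the canonical connection of $(\hat J_1,\hat J_2,\nabla)$. *)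

theory Defs
  imports "HOL-Analysis.Analysis"
begin

coinductive c_inf :: "'e::euclidean_space set \<Rightarrow> ('e \<Rightarrow> real) \<Rightarrow> bool" for U where
  "f differentiable_on U \<Longrightarrow> (\<forall>v. c_inf U (\<lambda>x. frechet_derivative f (at x) v)) \<Longrightarrow> c_inf U f"

definition smooth_atlas :: "'a topology \<Rightarrow> ('a set \<times> ('a \<Rightarrow> 'e::euclidean_space)) set \<Rightarrow> bool" where
  "smooth_atlas M A \<longleftrightarrow>
     (\<forall>(U,\<phi>)\<in>A. openin M U \<and> open (\<phi> ` U) \<and>
                   homeomorphic_map (subtopology M U) (top_of_set (\<phi> ` U)) \<phi>) \<and>
     (\<Union>(U,\<phi>)\<in>A. U) = topspace M \<and>
     (\<forall>(U,\<phi>)\<in>A. \<forall>(V,\<psi>)\<in>A. \<forall>b\<in>Basis.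
         c_inf (\<phi> ` (U \<inter> V)) (\<lambda>x. \<psi> (inv_into U \<phi> x) \<bullet> b))"

definition smooth_manifold :: "'a topology \<Rightarrow> ('a set \<times> ('a \<Rightarrow> 'e::euclidean_space)) set \<Rightarrow> bool" where
  "smooth_manifold M A \<longleftrightarrow> Hausdorff_space M \<and> second_countable M \<and> smooth_atlas M A"

text \<open>C-infinity functions on M (normalised to be 0 off the carrier).\<close>
definition smooth_fun :: "'a topology \<Rightarrow> ('a set \<times> ('a \<Rightarrow> 'e::euclidean_space)) set \<Rightarrow> ('a \<Rightarrow> real) \<Rightarrow> bool" where
  "smooth_fun M A f \<longleftrightarrow> (\<forall>(U,\<phi>)\<in>A. c_inf (\<phi> ` U) (f \<circ> inv_into U \<phi>)) \<and>
                         (\<forall>x. x \<notin> topspace M \<longrightarrow> f x = 0)"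

type_synonym 'a vf = "('a \<Rightarrow> real) \<Rightarrow> ('a \<Rightarrow> real)"
type_synonym 'a form = "'a vf \<Rightarrow> ('a \<Rightarrow> real)"
type_synonym 'a gsec = "'a vf \<times> 'a form"

text \<open>Smooth vector fields = derivations of the algebra of smooth functions
  (normalised to 0 on non-smooth arguments).\<close>
definition vector_field :: "'a topology \<Rightarrow> ('a set \<times> ('a \<Rightarrow> 'e::euclidean_space)) set \<Rightarrow> 'a vf \<Rightarrow> bool" where
  "vector_field M A X \<longleftrightarrow>
     (\<forall>f. smooth_fun M A f \<longrightarrow> smooth_fun M A (X f)) \<and>
     (\<forall>f. \<not> smooth_fun M A f \<longrightarrow> X f = (\<lambda>_. 0)) \<and>
     (\<forall>f g. smooth_fun M A f \<longrightarrow> smooth_fun M A g \<longrightarrow>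
          X (\<lambda>x. f x + g x) = (\<lambda>x. X f x + X g x) \<and>
          X (\<lambda>x. f x * g x) = (\<lambda>x. f x * X g x + g x * X f x)) \<and>
     (\<forall>c f. smooth_fun M A f \<longrightarrow> X (\<lambda>x. c * f x) = (\<lambda>x. c * X f x))"

definition vf_add :: "'a vf \<Rightarrow> 'a vf \<Rightarrow> 'a vf" where
  "vf_add X Y = (\<lambda>f x. X f x + Y f x)"

definition vf_smul :: "('a \<Rightarrow> real) \<Rightarrow> 'a vf \<Rightarrow> 'a vf" where
  "vf_smul g X = (\<lambda>f x. g x * X f x)"

definition vf_rsmul :: "real \<Rightarrow> 'a vf \<Rightarrow> 'a vf" where
  "vf_rsmul c X = (\<lambda>f x. c * X f x)"

definition lie :: "'a vf \<Rightarrow> 'a vf \<Rightarrow> 'a vf" where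
  "lie X Y = (\<lambda>f x. X (Y f) x - Y (X f) x)"

definition one_form :: "'a topology \<Rightarrow> ('a set \<times> ('a \<Rightarrow> 'e::euclidean_space)) set \<Rightarrow> 'a form \<Rightarrow> bool" where
  "one_form M A \<eta> \<longleftrightarrow>
     (\<forall>X. vector_field M A X \<longrightarrow> smooth_fun M A (\<eta> X)) \<and>
     (\<forall>X. \<not> vector_field M A X \<longrightarrow> \<eta> X = (\<lambda>_. 0)) \<and>
     (\<forall>X Y. vector_field M A X \<longrightarrow> vector_field M A Y \<longrightarrow>
          \<eta> (vf_add X Y) = (\<lambda>x. \<eta> X x + \<eta> Y x)) \<and>
     (\<forall>g X. smooth_fun M A g \<longrightarrow> vector_field M A X \<longrightarrow>
          \<eta> (vf_smul g X) = (\<lambda>x. g x * \<eta> X x))"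

definition gsection :: "'a topology \<Rightarrow> ('a set \<times> ('a \<Rightarrow> 'e::euclidean_space)) set \<Rightarrow> 'a gsec \<Rightarrow> bool" where
  "gsection M A \<sigma> \<longleftrightarrow> vector_field M A (fst \<sigma>) \<and> one_form M A (snd \<sigma>)"

definition szero :: "'a gsec" where
  "szero = ((\<lambda>f x. 0), (\<lambda>X x. 0))"

definition sadd :: "'a gsec \<Rightarrow> 'a gsec \<Rightarrow> 'a gsec" where
  "sadd \<sigma> \<tau> = ((\<lambda>f x. fst \<sigma> f x + fst \<tau> f x), (\<lambda>X x. snd \<sigma> X x + snd \<tau> X x))"

definition ssub :: "'a gsec \<Rightarrow> 'a gsec \<Rightarrow> 'a gsec" where
  "ssub \<sigma> \<tau> = ((\<lambda>f x. fst \<sigma> f x - fst \<tau> f x), (\<lambda>X x. snd \<sigma> X x - snd \<tau> X x))"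

definition sneg :: "'a gsec \<Rightarrow> 'a gsec" where
  "sneg \<sigma> = ((\<lambda>f x. - fst \<sigma> f x), (\<lambda>X x. - snd \<sigma> X x))"

definition ssmul :: "('a \<Rightarrow> real) \<Rightarrow> 'a gsec \<Rightarrow> 'a gsec" where
  "ssmul g \<sigma> = ((\<lambda>f x. g x * fst \<sigma> f x), (\<lambda>X x. g x * snd \<sigma> X x))"

definition srsmul :: "real \<Rightarrow> 'a gsec \<Rightarrow> 'a gsec" where
  "srsmul c \<sigma> = ((\<lambda>f x. c * fst \<sigma> f x), (\<lambda>X x. c * snd \<sigma> X x))"

definition affine_connection ::
  "'a topology \<Rightarrow> ('a set \<times> ('a \<Rightarrow> 'e::euclidean_space)) set \<Rightarrow> ('a vf \<Rightarrow> 'a vf \<Rightarrow> 'a vf) \<Rightarrow> bool" where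
  "affine_connection M A nabla \<longleftrightarrow>
     (\<forall>X Y. vector_field M A X \<longrightarrow> vector_field M A Y \<longrightarrow> vector_field M A (nabla X Y)) \<and>
     (\<forall>X Y. \<not> (vector_field M A X \<and> vector_field M A Y) \<longrightarrow> nabla X Y = (\<lambda>f x. 0)) \<and>
     (\<forall>X X' Y. vector_field M A X \<longrightarrow> vector_field M A X' \<longrightarrow> vector_field M A Y \<longrightarrow>
        nabla (vf_add X X') Y = vf_add (nabla X Y) (nabla X' Y) \<and>
        nabla Y (vf_add X X') = vf_add (nabla Y X) (nabla Y X')) \<and>
     (\<forall>c X Y. vector_field M A X \<longrightarrow> vector_field M A Y \<longrightarrow>
        nabla (vf_rsmul c X) Y = vf_rsmul c (nabla X Y) \<and>
        nabla X (vf_rsmul c Y) = vf_rsmul c (nabla X Y)) \<and>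
     (\<forall>g X Y. smooth_fun M A g \<longrightarrow> vector_field M A X \<longrightarrow> vector_field M A Y \<longrightarrow>
        nabla (vf_smul g X) Y = vf_smul g (nabla X Y) \<and>
        nabla X (vf_smul g Y) = vf_add (vf_smul (X g) Y) (vf_smul g (nabla X Y)))"

definition nabla_form ::
  "'a topology \<Rightarrow> ('a set \<times> ('a \<Rightarrow> 'e::euclidean_space)) set \<Rightarrow> ('a vf \<Rightarrow> 'a vf \<Rightarrow> 'a vf) \<Rightarrow> 'a vf \<Rightarrow> 'a form \<Rightarrow> 'a form" where
  "nabla_form M A nabla X \<eta> =
     (\<lambda>Y x. if vector_field M A Y then X (\<eta> Y) x - \<eta> (nabla X Y) x else 0)"

definition nabla_bracket ::
  "'a topology \<Rightarrow> ('a set \<times> ('a \<Rightarrow> 'e::euclidean_space)) set \<Rightarrow> ('a vf \<Rightarrow> 'a vf \<Rightarrow> 'a vf) \<Rightarrow> 'a gsec \<Rightarrow> 'a gsec \<Rightarrow> 'a gsec" where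
  "nabla_bracket M A nabla \<sigma> \<tau> =
     (lie (fst \<sigma>) (fst \<tau>),
      (\<lambda>Y x. nabla_form M A nabla (fst \<sigma>) (snd \<tau>) Y x - nabla_form M A nabla (fst \<tau>) (snd \<sigma>) Y x))"

text \<open>Smooth bundle endomorphisms of TM + T*M = C-infinity-linear maps on smooth sections
  (normalised to 0 off the sections).\<close>
definition bundle_endo ::
  "'a topology \<Rightarrow> ('a set \<times> ('a \<Rightarrow> 'e::euclidean_space)) set \<Rightarrow> ('a gsec \<Rightarrow> 'a gsec) \<Rightarrow> bool" where
  "bundle_endo M A K \<longleftrightarrow>
     (\<forall>\<sigma>. gsection M A \<sigma> \<longrightarrow> gsection M A (K \<sigma>)) \<and>
     (\<forall>\<sigma>. \<not> gsection M A \<sigma> \<longrightarrow> K \<sigma> = szero) \<and>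
     (\<forall>\<sigma> \<tau>. gsection M A \<sigma> \<longrightarrow> gsection M A \<tau> \<longrightarrow> K (sadd \<sigma> \<tau>) = sadd (K \<sigma>) (K \<tau>)) \<and>
     (\<forall>g \<sigma>. smooth_fun M A g \<longrightarrow> gsection M A \<sigma> \<longrightarrow> K (ssmul g \<sigma>) = ssmul g (K \<sigma>))"

definition gen_almost_product ::
  "'a topology \<Rightarrow> ('a set \<times> ('a \<Rightarrow> 'e::euclidean_space)) set \<Rightarrow> ('a gsec \<Rightarrow> 'a gsec) \<Rightarrow> bool" where
  "gen_almost_product M A K \<longleftrightarrow>
     bundle_endo M A K \<and> (\<forall>\<sigma>. gsection M A \<sigma> \<longrightarrow> K (K \<sigma>) = \<sigma>)"

definition gen_affine_connection ::
  "'a topology \<Rightarrow> ('a set \<times> ('a \<Rightarrow> 'e::euclidean_space)) set \<Rightarrow> ('a gsec \<Rightarrow> 'a gsec \<Rightarrow> 'a gsec) \<Rightarrow> bool" where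
  "gen_affine_connection M A D \<longleftrightarrow>
     (\<forall>\<sigma> \<tau>. gsection M A \<sigma> \<longrightarrow> gsection M A \<tau> \<longrightarrow> gsection M A (D \<sigma> \<tau>)) \<and>
     (\<forall>\<sigma> \<tau>. \<not> (gsection M A \<sigma> \<and> gsection M A \<tau>) \<longrightarrow> D \<sigma> \<tau> = szero) \<and>
     (\<forall>\<sigma> \<sigma>' \<tau>. gsection M A \<sigma> \<longrightarrow> gsection M A \<sigma>' \<longrightarrow> gsection M A \<tau> \<longrightarrow>
        D (sadd \<sigma> \<sigma>') \<tau> = sadd (D \<sigma> \<tau>) (D \<sigma>' \<tau>) \<and>
        D \<tau> (sadd \<sigma> \<sigma>') = sadd (D \<tau> \<sigma>) (D \<tau> \<sigma>')) \<and>
     (\<forall>c \<sigma> \<tau>. gsection M A \<sigma> \<longrightarrow> gsection M A \<tau> \<longrightarrow>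
        D (srsmul c \<sigma>) \<tau> = srsmul c (D \<sigma> \<tau>) \<and>
        D \<sigma> (srsmul c \<tau>) = srsmul c (D \<sigma> \<tau>)) \<and>
     (\<forall>g \<sigma> \<tau>. smooth_fun M A g \<longrightarrow> gsection M A \<sigma> \<longrightarrow> gsection M A \<tau> \<longrightarrow>
        D (ssmul g \<sigma>) \<tau> = ssmul g (D \<sigma> \<tau>) \<and>
        D \<sigma> (ssmul g \<tau>) = sadd (ssmul (fst \<sigma> g) \<tau>) (ssmul g (D \<sigma> \<tau>)))"

definition cov_endo :: "('a gsec \<Rightarrow> 'a gsec \<Rightarrow> 'a gsec) \<Rightarrow> ('a gsec \<Rightarrow> 'a gsec) \<Rightarrow> 'a gsec \<Rightarrow> 'a gsec \<Rightarrow> 'a gsec" where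
  "cov_endo D K \<sigma> \<tau> = ssub (D \<sigma> (K \<tau>)) (K (D \<sigma> \<tau>))"

definition gen_torsion ::
  "'a topology \<Rightarrow> ('a set \<times> ('a \<Rightarrow> 'e::euclidean_space)) set \<Rightarrow> ('a vf \<Rightarrow> 'a vf \<Rightarrow> 'a vf) \<Rightarrow>
   ('a gsec \<Rightarrow> 'a gsec \<Rightarrow> 'a gsec) \<Rightarrow> 'a gsec \<Rightarrow> 'a gsec \<Rightarrow> 'a gsec" where
  "gen_torsion M A nabla D \<sigma> \<tau> = ssub (ssub (D \<sigma> \<tau>) (D \<tau> \<sigma>)) (nabla_bracket M A nabla \<sigma> \<tau>)"

end

(*
  Let V1, V2 be the (+1)- and (-1)-eigenbundles of J1, with projections pr1 = (1 + J1)/2 and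
  pr2 = (1 - J1)/2; since J2 anticommutes with J1, it exchanges V1 and V2. A connection D with
  D J1 = 0 preserves V1 and V2, so for a in V1 and b in V2 the torsion condition
  D_a b - D_b a = [a, b] splits into components: D_a b = pr2 [a, b] and D_b a = pr1 [b, a].
  Since D J2 = 0, for c in V1 also D_a c = J2 (D_a (J2 c)) = J2 (pr2 [a, J2 c]). Together with
  the symmetric formulas along V2 this determines D; conversely these formulas define a
  generalized connection with all required properties. Replacing J1 by -J1 exchanges V1 and
  V2, so every argument only has to be made along V1.
*)

theory Submission
  imports Defs
begin

section \<open>C-infinity functions\<close>

definition sum_of_products :: "(('e \<Rightarrow> real) \<times> ('e \<Rightarrow> real)) list \<Rightarrow> 'e \<Rightarrow> real" where
  "sum_of_products ps x = (\<Sum>(f, g)\<leftarrow>ps. f x * g x)"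

definition sum_of_products_deriv ::
  "(('e::euclidean_space \<Rightarrow> real) \<times> ('e \<Rightarrow> real)) list \<Rightarrow> 'e \<Rightarrow> (('e \<Rightarrow> real) \<times> ('e \<Rightarrow> real)) list" where
  "sum_of_products_deriv ps v =
     concat (map (\<lambda>(f, g). [(f, \<lambda>x. frechet_derivative g (at x) v),
                           (\<lambda>x. frechet_derivative f (at x) v, g)]) ps)"

lemma sum_of_products_Nil [simp]: "sum_of_products [] x = 0"
  by (simp add: sum_of_products_def)

lemma sum_of_products_Cons [simp]:
  "sum_of_products (p # ps) x = fst p x * snd p x + sum_of_products ps x"
  by (cases p) (simp add: sum_of_products_def)

lemma sum_of_products_deriv_Nil [simp]: "sum_of_products_deriv [] v = []"
  by (simp add: sum_of_products_deriv_def)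

lemma sum_of_products_deriv_Cons [simp]:
  "sum_of_products_deriv (p # ps) v =
     (fst p, \<lambda>x. frechet_derivative (snd p) (at x) v) #
     (\<lambda>x. frechet_derivative (fst p) (at x) v, snd p) # sum_of_products_deriv ps v"
  by (cases p) (simp add: sum_of_products_deriv_def)

lemma has_derivative_sum_of_products:
  assumes "\<forall>p\<in>set ps. fst p differentiable (at x) \<and> snd p differentiable (at x)"
  shows "(sum_of_products ps has_derivative (\<lambda>v. sum_of_products (sum_of_products_deriv ps v) x)) (at x)"
  using assms
proof (induction ps)
  case Nil
  then show ?case by (simp add: sum_of_products_def[abs_def])
next
  case (Cons p ps)
  obtain f g where p: "p = (f, g)" by fastforce
  have "(f has_derivative frechet_derivative f (at x)) (at x)"
    and "(g has_derivative frechet_derivative g (at x)) (at x)"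
    using Cons.prems frechet_derivative_works by (auto simp: p)
  from has_derivative_add[OF has_derivative_mult[OF this] Cons.IH] Cons.prems
  show ?case by (simp add: p sum_of_products_def[abs_def] algebra_simps)
qed

text \<open>By the product rule, sums of products of C-infinity functions are closed under
  differentiation; this is the invariant of the coinduction.\<close>

lemma c_inf_sum_of_products:
  assumes U: "open U"
    and ps: "\<forall>p\<in>set ps. c_inf U (fst p) \<and> c_inf U (snd p)"
    and h: "\<forall>x\<in>U. h x = sum_of_products ps x"
  shows "c_inf U h"
  using ps h
proof (coinduction arbitrary: h ps rule: c_inf.coinduct)
  case (c_inf h ps)
  have "fst p differentiable (at x) \<and> snd p differentiable (at x)" if "x \<in> U" "p \<in> set ps" for x p
    using c_inf(1) that differentiable_on_eq_differentiable_at[OF U] by (auto elim: c_inf.cases)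
  then have deriv: "(h has_derivative (\<lambda>v. sum_of_products (sum_of_products_deriv ps v) x)) (at x)"
    if "x \<in> U" for x
    using has_derivative_transform_within_open[OF has_derivative_sum_of_products U that] c_inf(2) that
    by auto
  have "h differentiable_on U"
    using deriv differentiable_on_eq_differentiable_at[OF U] unfolding differentiable_def by blast
  moreover have "frechet_derivative h (at x) v = sum_of_products (sum_of_products_deriv ps v) x"
    if "x \<in> U" for x v
    using fun_cong[OF frechet_derivative_at[OF deriv[OF that]], of v] by simp
  moreover have "\<forall>p\<in>set (sum_of_products_deriv ps v). c_inf U (fst p) \<and> c_inf U (snd p)" for v
    using c_inf(1) by (induction ps) (auto elim: c_inf.cases)
  ultimately show ?case by blast
qed

lemma c_inf_const: "c_inf U (\<lambda>x. c)"
proof -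
  have "c_inf U h" if "h = (\<lambda>x. c)" for h c
    using that
  proof (coinduction arbitrary: h c rule: c_inf.coinduct)
    case (c_inf h)
    have "frechet_derivative h (at x) = (\<lambda>v. 0)" for x
      using frechet_derivative_at[OF has_derivative_const[of c "at x"]] c_inf by simp
    then show ?case using c_inf by auto
  qed
  then show ?thesis by blast
qed

lemma c_inf_cong: "open U \<Longrightarrow> c_inf U f \<Longrightarrow> (\<And>x. x \<in> U \<Longrightarrow> h x = f x) \<Longrightarrow> c_inf U h"
  by (rule c_inf_sum_of_products[where ps = "[(f, \<lambda>_. 1)]"]) (auto simp: c_inf_const)

lemma gsec_eq_iff:
  "(\<sigma>::'a gsec) = \<tau> \<longleftrightarrow> (\<forall>f x. fst \<sigma> f x = fst \<tau> f x) \<and> (\<forall>X x. snd \<sigma> X x = snd \<tau> X x)"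
  by (auto simp: prod_eq_iff fun_eq_iff)

lemmas gsec_ops = szero_def sadd_def ssub_def sneg_def ssmul_def srsmul_def

lemma sadd_szero [simp]: "sadd \<sigma> szero = \<sigma>" "sadd szero \<sigma> = \<sigma>"
  by (simp_all add: gsec_ops)

lemma ssub_szero [simp]: "ssub \<sigma> szero = \<sigma>"
  by (simp add: gsec_ops)

lemma sneg_szero [simp]: "sneg szero = szero"
  by (simp add: gsec_ops)

lemma ssmul_szero [simp]: "ssmul g szero = szero"
  by (simp add: gsec_ops)

lemma sadd_commute: "sadd \<sigma> \<tau> = sadd \<tau> \<sigma>"
  by (simp add: gsec_ops add.commute)

lemma sneg_sneg [simp]: "sneg (sneg \<sigma>) = \<sigma>"
  by (simp add: gsec_ops)

lemma sneg_eq_iff: "sneg \<sigma> = \<tau> \<longleftrightarrow> \<sigma> = sneg \<tau>"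
  by auto

lemma ssmul_sadd: "ssmul g (sadd \<sigma> \<tau>) = sadd (ssmul g \<sigma>) (ssmul g \<tau>)"
  by (simp add: gsec_ops algebra_simps)

lemma srsmul_zero [simp]: "srsmul 0 \<sigma> = szero"
  by (simp add: gsec_ops)

lemma sneg_conv_srsmul: "sneg \<sigma> = srsmul (-1) \<sigma>"
  by (simp add: gsec_ops)

lemma ssub_conv_sadd_sneg: "ssub \<sigma> \<tau> = sadd \<sigma> (sneg \<tau>)"
  by (simp add: gsec_ops)

lemma ssub_eq_szero_iff: "ssub \<sigma> \<tau> = szero \<longleftrightarrow> \<sigma> = \<tau>"
  by (auto simp: gsec_eq_iff gsec_ops)

lemma gen_affine_connection_gsection:
  "gen_affine_connection M A D \<Longrightarrow> gsection M A \<sigma> \<Longrightarrow> gsection M A \<tau> \<Longrightarrow> gsection M A (D \<sigma> \<tau>)"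
  unfolding gen_affine_connection_def by blast

lemma gen_affine_connection_sadd_left:
  "gen_affine_connection M A D \<Longrightarrow> gsection M A \<sigma> \<Longrightarrow> gsection M A \<sigma>' \<Longrightarrow> gsection M A \<tau> \<Longrightarrow>
     D (sadd \<sigma> \<sigma>') \<tau> = sadd (D \<sigma> \<tau>) (D \<sigma>' \<tau>)"
  unfolding gen_affine_connection_def by blast

lemma gen_affine_connection_sadd_right:
  "gen_affine_connection M A D \<Longrightarrow> gsection M A \<sigma> \<Longrightarrow> gsection M A \<tau> \<Longrightarrow> gsection M A \<tau>' \<Longrightarrow>
     D \<sigma> (sadd \<tau> \<tau>') = sadd (D \<sigma> \<tau>) (D \<sigma> \<tau>')"
  unfolding gen_affine_connection_def by blast

lemma gen_affine_connection_sneg_right: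
  "gen_affine_connection M A D \<Longrightarrow> gsection M A \<sigma> \<Longrightarrow> gsection M A \<tau> \<Longrightarrow>
     D \<sigma> (sneg \<tau>) = sneg (D \<sigma> \<tau>)"
  unfolding gen_affine_connection_def sneg_conv_srsmul by blast

lemma gen_affine_connection_nonsection:
  "gen_affine_connection M A D \<Longrightarrow> \<not> (gsection M A \<sigma> \<and> gsection M A \<tau>) \<Longrightarrow> D \<sigma> \<tau> = szero"
  unfolding gen_affine_connection_def by blast

section \<open>Smooth functions, vector fields and 1-forms\<close>

locale smooth_charts =
  fixes M :: "'a topology" and A :: "('a set \<times> ('a \<Rightarrow> 'e::euclidean_space)) set"
  assumes openin_chart_domain: "(U, \<phi>) \<in> A \<Longrightarrow> openin M U"
    and open_chart_image: "(U, \<phi>) \<in> A \<Longrightarrow> open (\<phi> ` U)"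

lemma smooth_manifold_imp_smooth_charts: "smooth_manifold M A \<Longrightarrow> smooth_charts M A"
  unfolding smooth_manifold_def smooth_atlas_def smooth_charts_def by fast

context smooth_charts
begin

lemma smooth_fun_sum_of_products:
  assumes ps: "\<forall>p\<in>set ps. smooth_fun M A (fst p) \<and> smooth_fun M A (snd p)"
    and h: "\<And>x. h x = sum_of_products ps x"
  shows "smooth_fun M A h"
  unfolding smooth_fun_def
proof (intro conjI ballI allI impI)
  fix c assume "c \<in> A"
  then obtain U \<phi> where c: "c = (U, \<phi>)" "(U, \<phi>) \<in> A" by (cases c) auto
  let ?ps = "map (\<lambda>p. (fst p \<circ> inv_into U \<phi>, snd p \<circ> inv_into U \<phi>)) ps"
  have "sum_of_products ?ps y = sum_of_products ps (inv_into U \<phi> y)" for y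
    by (induction ps) auto
  then have "c_inf (\<phi> ` U) (h \<circ> inv_into U \<phi>)"
    using ps c open_chart_image
    by (intro c_inf_sum_of_products[where ps = ?ps]) (auto simp: h smooth_fun_def)
  then show "case c of (U, \<phi>) \<Rightarrow> c_inf (\<phi> ` U) (h \<circ> inv_into U \<phi>)" using c by simp
next
  fix x assume "x \<notin> topspace M"
  with ps have "sum_of_products ps x = 0"
    by (induction ps) (auto simp: smooth_fun_def)
  then show "h x = 0" by (simp add: h)
qed

lemma smooth_fun_zero [simp]: "smooth_fun M A (\<lambda>x. 0)"
  by (rule smooth_fun_sum_of_products[where ps = "[]"]) auto

lemma smooth_fun_mult [simp]:
  "smooth_fun M A f \<Longrightarrow> smooth_fun M A g \<Longrightarrow> smooth_fun M A (\<lambda>x. f x * g x)"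
  by (rule smooth_fun_sum_of_products[where ps = "[(f, g)]"]) auto

text \<open>Smooth functions are normalised to vanish off the manifold, so constants are not smooth;
  their role is played by the following functions.\<close>

lemma smooth_fun_const_on: "smooth_fun M A (\<lambda>x. if x \<in> topspace M then c else 0)"
  unfolding smooth_fun_def
proof (intro conjI ballI allI impI)
  fix p assume "p \<in> A"
  then obtain U \<phi> where p: "p = (U, \<phi>)" "(U, \<phi>) \<in> A" by (cases p) auto
  then have "U \<subseteq> topspace M" by (auto dest: openin_chart_domain openin_subset)
  then have "c_inf (\<phi> ` U) ((\<lambda>x. if x \<in> topspace M then c else 0) \<circ> inv_into U \<phi>)"
    using open_chart_image[OF p(2)] inv_into_into[of _ \<phi> U]
    by (intro c_inf_cong[OF _ c_inf_const]) auto
  then show "case p of (U, \<phi>) \<Rightarrow> c_inf (\<phi> ` U) ((\<lambda>x. if x \<in> topspace M then c else 0) \<circ> inv_into U \<phi>)"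
    using p by simp
qed simp

lemma smooth_fun_vanishes: "smooth_fun M A f \<Longrightarrow> x \<notin> topspace M \<Longrightarrow> f x = 0"
  unfolding smooth_fun_def by auto

lemma smooth_fun_lincomb:
  assumes f: "smooth_fun M A f" and g: "smooth_fun M A g"
  shows "smooth_fun M A (\<lambda>x. a * f x + b * g x)"
proof (rule smooth_fun_sum_of_products)
  let ?ps = "[(f, \<lambda>x. if x \<in> topspace M then a else 0), (g, \<lambda>x. if x \<in> topspace M then b else 0)]"
  show "\<forall>p\<in>set ?ps. smooth_fun M A (fst p) \<and> smooth_fun M A (snd p)"
    using f g smooth_fun_const_on by auto
  show "a * f x + b * g x = sum_of_products ?ps x" for x
    using smooth_fun_vanishes[OF f] smooth_fun_vanishes[OF g] by (cases "x \<in> topspace M") auto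
qed

lemma smooth_fun_add [simp]: "smooth_fun M A f \<Longrightarrow> smooth_fun M A g \<Longrightarrow> smooth_fun M A (\<lambda>x. f x + g x)"
  using smooth_fun_lincomb[of f g 1 1] by simp

lemma smooth_fun_diff [simp]: "smooth_fun M A f \<Longrightarrow> smooth_fun M A g \<Longrightarrow> smooth_fun M A (\<lambda>x. f x - g x)"
  using smooth_fun_lincomb[of f g 1 "-1"] by simp

lemma smooth_fun_cmult [simp]: "smooth_fun M A f \<Longrightarrow> smooth_fun M A (\<lambda>x. c * f x)"
  using smooth_fun_lincomb[of f f c 0] by simp

lemma smooth_fun_minus [simp]: "smooth_fun M A f \<Longrightarrow> smooth_fun M A (\<lambda>x. - f x)"
  using smooth_fun_lincomb[of f f "-1" 0] by simp

lemma vector_field_smooth [simp]: "vector_field M A X \<Longrightarrow> smooth_fun M A f \<Longrightarrow> smooth_fun M A (X f)"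
  unfolding vector_field_def by blast

lemma vector_field_nonsmooth: "vector_field M A X \<Longrightarrow> \<not> smooth_fun M A f \<Longrightarrow> X f = (\<lambda>_. 0)"
  unfolding vector_field_def by blast

lemma vector_field_add [simp]:
  "vector_field M A X \<Longrightarrow> smooth_fun M A f \<Longrightarrow> smooth_fun M A g \<Longrightarrow>
     X (\<lambda>x. f x + g x) = (\<lambda>x. X f x + X g x)"
  unfolding vector_field_def by blast

lemma vector_field_mult [simp]:
  "vector_field M A X \<Longrightarrow> smooth_fun M A f \<Longrightarrow> smooth_fun M A g \<Longrightarrow>
     X (\<lambda>x. f x * g x) = (\<lambda>x. f x * X g x + g x * X f x)"
  unfolding vector_field_def by blast

lemma vector_field_cmult [simp]:
  "vector_field M A X \<Longrightarrow> smooth_fun M A f \<Longrightarrow> X (\<lambda>x. c * f x) = (\<lambda>x. c * X f x)"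
  unfolding vector_field_def by blast

lemma vector_field_zero_fun [simp]: "vector_field M A X \<Longrightarrow> X (\<lambda>x. 0) = (\<lambda>x. 0)"
  using vector_field_cmult[of X "\<lambda>x. 0" 0] by simp

lemma vector_field_minus [simp]:
  "vector_field M A X \<Longrightarrow> smooth_fun M A f \<Longrightarrow> X (\<lambda>x. - f x) = (\<lambda>x. - X f x)"
  using vector_field_cmult[of X f "-1"] by simp

lemma vector_field_vanishes: "vector_field M A X \<Longrightarrow> x \<notin> topspace M \<Longrightarrow> X f x = 0"
  by (cases "smooth_fun M A f") (auto simp: vector_field_nonsmooth smooth_fun_vanishes)

lemma vector_field_const_on:
  assumes X: "vector_field M A X"
  shows "X (\<lambda>x. if x \<in> topspace M then c else 0) = (\<lambda>x. 0)"
proof -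
  define one where "one = (\<lambda>x. if x \<in> topspace M then 1 else (0::real))"
  have one: "smooth_fun M A one"
    unfolding one_def by (rule smooth_fun_const_on)
  have idem: "(\<lambda>x. one x * one x) = one"
    by (simp add: one_def fun_eq_iff)
  have "X one x = 2 * one x * X one x" for x
    using fun_cong[OF vector_field_mult[OF X one one, unfolded idem], of x] by simp
  then have "X one = (\<lambda>x. 0)"
    using vector_field_vanishes[OF X] by (force simp: one_def split: if_splits)
  moreover have "(\<lambda>x. if x \<in> topspace M then c else 0) = (\<lambda>x. c * one x)"
    by (simp add: one_def fun_eq_iff)
  ultimately show ?thesis
    using vector_field_cmult[OF X one] by simp
qed

lemma vector_field_zero [simp]: "vector_field M A (\<lambda>f x. 0)"
  unfolding vector_field_def by simp

lemma vector_field_sum [simp]: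
  "vector_field M A X \<Longrightarrow> vector_field M A Y \<Longrightarrow> vector_field M A (\<lambda>f x. X f x + Y f x)"
  unfolding vector_field_def[of M A "\<lambda>f x. X f x + Y f x"]
  by (auto simp: vector_field_nonsmooth algebra_simps)

lemma vector_field_scale [simp]:
  "smooth_fun M A g \<Longrightarrow> vector_field M A X \<Longrightarrow> vector_field M A (\<lambda>f x. g x * X f x)"
  unfolding vector_field_def[of M A "\<lambda>f x. g x * X f x"]
  by (auto simp: vector_field_nonsmooth algebra_simps)

lemma vector_field_cscale [simp]: "vector_field M A X \<Longrightarrow> vector_field M A (\<lambda>f x. c * X f x)"
  unfolding vector_field_def[of M A "\<lambda>f x. c * X f x"]
  by (auto simp: vector_field_nonsmooth algebra_simps)

lemma vector_field_neg [simp]: "vector_field M A X \<Longrightarrow> vector_field M A (\<lambda>f x. - X f x)"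
  unfolding vector_field_def[of M A "\<lambda>f x. - X f x"]
  by (auto simp: vector_field_nonsmooth algebra_simps)

lemma vector_field_difference [simp]:
  "vector_field M A X \<Longrightarrow> vector_field M A Y \<Longrightarrow> vector_field M A (\<lambda>f x. X f x - Y f x)"
  unfolding vector_field_def[of M A "\<lambda>f x. X f x - Y f x"]
  by (auto simp: vector_field_nonsmooth algebra_simps)

lemma vector_field_lie [simp]:
  assumes X: "vector_field M A X" and Y: "vector_field M A Y"
  shows "vector_field M A (lie X Y)"
proof -
  have leibniz: "lie X Y (\<lambda>x. f x * g x) = (\<lambda>x. f x * lie X Y g x + g x * lie X Y f x)"
    if f: "smooth_fun M A f" and g: "smooth_fun M A g" for f g
  proof -
    have "X (Y (\<lambda>x. f x * g x)) = (\<lambda>x. f x * X (Y g) x + Y g x * X f x + (g x * X (Y f) x + Y f x * X g x))"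
      using vector_field_add[OF X, of "\<lambda>x. f x * Y g x" "\<lambda>x. g x * Y f x"] X Y f g by simp
    moreover have "Y (X (\<lambda>x. f x * g x)) = (\<lambda>x. f x * Y (X g) x + X g x * Y f x + (g x * Y (X f) x + X f x * Y g x))"
      using vector_field_add[OF Y, of "\<lambda>x. f x * X g x" "\<lambda>x. g x * X f x"] X Y f g by simp
    ultimately show ?thesis
      by (simp add: lie_def algebra_simps)
  qed
  show ?thesis
    unfolding vector_field_def[of M A "lie X Y"]
    using X Y leibniz by (simp add: lie_def vector_field_nonsmooth algebra_simps del: vector_field_mult)
qed

lemma one_form_smooth [simp]: "one_form M A \<eta> \<Longrightarrow> vector_field M A X \<Longrightarrow> smooth_fun M A (\<eta> X)"
  unfolding one_form_def by blast

lemma one_form_nonvf: "one_form M A \<eta> \<Longrightarrow> \<not> vector_field M A X \<Longrightarrow> \<eta> X = (\<lambda>_. 0)"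
  unfolding one_form_def by blast

lemma one_form_add [simp]:
  "one_form M A \<eta> \<Longrightarrow> vector_field M A X \<Longrightarrow> vector_field M A Y \<Longrightarrow>
     \<eta> (\<lambda>f x. X f x + Y f x) = (\<lambda>x. \<eta> X x + \<eta> Y x)"
  unfolding one_form_def vf_add_def by blast

lemma one_form_scale_arg [simp]:
  "one_form M A \<eta> \<Longrightarrow> smooth_fun M A g \<Longrightarrow> vector_field M A X \<Longrightarrow>
     \<eta> (\<lambda>f x. g x * X f x) = (\<lambda>x. g x * \<eta> X x)"
  unfolding one_form_def vf_smul_def by blast

lemma one_form_vanishes: "one_form M A \<eta> \<Longrightarrow> x \<notin> topspace M \<Longrightarrow> \<eta> X x = 0"
  by (cases "vector_field M A X") (auto simp: one_form_nonvf smooth_fun_vanishes)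

lemma one_form_zero [simp]: "one_form M A (\<lambda>X x. 0)"
  unfolding one_form_def by simp

lemma one_form_sum [simp]:
  "one_form M A \<eta> \<Longrightarrow> one_form M A \<beta> \<Longrightarrow> one_form M A (\<lambda>X x. \<eta> X x + \<beta> X x)"
  unfolding one_form_def[of M A "\<lambda>X x. \<eta> X x + \<beta> X x"]
  by (auto simp: one_form_nonvf vf_add_def vf_smul_def algebra_simps)

lemma one_form_difference [simp]:
  "one_form M A \<eta> \<Longrightarrow> one_form M A \<beta> \<Longrightarrow> one_form M A (\<lambda>X x. \<eta> X x - \<beta> X x)"
  unfolding one_form_def[of M A "\<lambda>X x. \<eta> X x - \<beta> X x"]
  by (auto simp: one_form_nonvf vf_add_def vf_smul_def algebra_simps)

lemma one_form_scale [simp]: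
  "smooth_fun M A g \<Longrightarrow> one_form M A \<eta> \<Longrightarrow> one_form M A (\<lambda>X x. g x * \<eta> X x)"
  unfolding one_form_def[of M A "\<lambda>X x. g x * \<eta> X x"]
  by (auto simp: one_form_nonvf vf_add_def vf_smul_def algebra_simps)

lemma one_form_cscale [simp]: "one_form M A \<eta> \<Longrightarrow> one_form M A (\<lambda>X x. c * \<eta> X x)"
  unfolding one_form_def[of M A "\<lambda>X x. c * \<eta> X x"]
  by (auto simp: one_form_nonvf vf_add_def vf_smul_def algebra_simps)

lemma one_form_neg [simp]: "one_form M A \<eta> \<Longrightarrow> one_form M A (\<lambda>X x. - \<eta> X x)"
  unfolding one_form_def[of M A "\<lambda>X x. - \<eta> X x"]
  by (auto simp: one_form_nonvf vf_add_def vf_smul_def algebra_simps)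

lemma gsection_szero [simp]: "gsection M A szero"
  unfolding gsection_def szero_def by simp

lemma gsection_sadd [simp]: "gsection M A \<sigma> \<Longrightarrow> gsection M A \<tau> \<Longrightarrow> gsection M A (sadd \<sigma> \<tau>)"
  unfolding gsection_def sadd_def by simp

lemma gsection_ssub [simp]: "gsection M A \<sigma> \<Longrightarrow> gsection M A \<tau> \<Longrightarrow> gsection M A (ssub \<sigma> \<tau>)"
  unfolding gsection_def ssub_def by simp

lemma gsection_sneg [simp]: "gsection M A \<sigma> \<Longrightarrow> gsection M A (sneg \<sigma>)"
  unfolding gsection_def sneg_def by simp

lemma gsection_ssmul [simp]: "smooth_fun M A g \<Longrightarrow> gsection M A \<sigma> \<Longrightarrow> gsection M A (ssmul g \<sigma>)"
  unfolding gsection_def ssmul_def by simp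

lemma gsection_srsmul [simp]: "gsection M A \<sigma> \<Longrightarrow> gsection M A (srsmul c \<sigma>)"
  unfolding gsection_def srsmul_def by simp

lemma smooth_fun_gsection_apply [simp]:
  "gsection M A \<sigma> \<Longrightarrow> smooth_fun M A g \<Longrightarrow> smooth_fun M A (fst \<sigma> g)"
  unfolding gsection_def by simp

lemma ssmul_const_on:
  assumes "gsection M A \<sigma>"
  shows "ssmul (\<lambda>x. if x \<in> topspace M then c else 0) \<sigma> = srsmul c \<sigma>"
  using assms vector_field_vanishes one_form_vanishes
  by (auto simp: gsection_def ssmul_def srsmul_def fun_eq_iff prod_eq_iff)

definition sec_linear :: "('a gsec \<Rightarrow> 'a gsec) \<Rightarrow> bool" where
  "sec_linear L \<longleftrightarrow>
     (\<forall>\<sigma>. gsection M A \<sigma> \<longrightarrow> gsection M A (L \<sigma>)) \<and>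
     (\<forall>\<sigma> \<tau>. gsection M A \<sigma> \<longrightarrow> gsection M A \<tau> \<longrightarrow> L (sadd \<sigma> \<tau>) = sadd (L \<sigma>) (L \<tau>)) \<and>
     (\<forall>c \<sigma>. gsection M A \<sigma> \<longrightarrow> L (srsmul c \<sigma>) = srsmul c (L \<sigma>))"

lemma sec_linear_gsection: "sec_linear L \<Longrightarrow> gsection M A \<sigma> \<Longrightarrow> gsection M A (L \<sigma>)"
  unfolding sec_linear_def by blast

lemma sec_linear_sadd:
  "sec_linear L \<Longrightarrow> gsection M A \<sigma> \<Longrightarrow> gsection M A \<tau> \<Longrightarrow> L (sadd \<sigma> \<tau>) = sadd (L \<sigma>) (L \<tau>)"
  unfolding sec_linear_def by blast

lemma sec_linear_srsmul: "sec_linear L \<Longrightarrow> gsection M A \<sigma> \<Longrightarrow> L (srsmul c \<sigma>) = srsmul c (L \<sigma>)"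
  unfolding sec_linear_def by blast

lemma sec_linear_sneg: "sec_linear L \<Longrightarrow> gsection M A \<sigma> \<Longrightarrow> L (sneg \<sigma>) = sneg (L \<sigma>)"
  using sec_linear_srsmul[of L \<sigma> "-1"] by (simp add: sneg_conv_srsmul)

lemma sec_linear_ssub:
  "sec_linear L \<Longrightarrow> gsection M A \<sigma> \<Longrightarrow> gsection M A \<tau> \<Longrightarrow> L (ssub \<sigma> \<tau>) = ssub (L \<sigma>) (L \<tau>)"
  by (simp add: ssub_conv_sadd_sneg sec_linear_sadd sec_linear_sneg)

lemma sec_linear_szero: "sec_linear L \<Longrightarrow> L szero = szero"
  using sec_linear_srsmul[of L szero 0] by simp

lemma sec_linear_id: "sec_linear (\<lambda>\<sigma>. \<sigma>)"
  unfolding sec_linear_def by simp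

lemma sec_linear_comp: "sec_linear L \<Longrightarrow> sec_linear L' \<Longrightarrow> sec_linear (\<lambda>\<sigma>. L (L' \<sigma>))"
  unfolding sec_linear_def by (simp del: split_paired_All)

lemma sec_linear_sum:
  assumes L: "sec_linear L" and L': "sec_linear L'"
  shows "sec_linear (\<lambda>\<sigma>. sadd (L \<sigma>) (L' \<sigma>))"
  unfolding sec_linear_def
  by (simp add: sec_linear_gsection[OF L] sec_linear_gsection[OF L'] sec_linear_sadd[OF L]
      sec_linear_sadd[OF L'] sec_linear_srsmul[OF L] sec_linear_srsmul[OF L'])
    (simp add: gsec_eq_iff gsec_ops algebra_simps)

lemma sec_linear_difference:
  assumes L: "sec_linear L" and L': "sec_linear L'"
  shows "sec_linear (\<lambda>\<sigma>. ssub (L \<sigma>) (L' \<sigma>))"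
  unfolding sec_linear_def
  by (simp add: sec_linear_gsection[OF L] sec_linear_gsection[OF L'] sec_linear_sadd[OF L]
      sec_linear_sadd[OF L'] sec_linear_srsmul[OF L] sec_linear_srsmul[OF L'])
    (simp add: gsec_eq_iff gsec_ops algebra_simps)

lemma sec_linear_scale:
  assumes L: "sec_linear L"
  shows "sec_linear (\<lambda>\<sigma>. srsmul c (L \<sigma>))"
  unfolding sec_linear_def
  by (simp add: sec_linear_gsection[OF L] sec_linear_sadd[OF L] sec_linear_srsmul[OF L])
    (simp add: gsec_eq_iff gsec_ops algebra_simps)

lemma bundle_endo_sec_linear:
  assumes K: "bundle_endo M A K"
  shows "sec_linear K"
proof -
  have "K (srsmul c \<sigma>) = srsmul c (K \<sigma>)" if \<sigma>: "gsection M A \<sigma>" for c \<sigma>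
    using K \<sigma> smooth_fun_const_on ssmul_const_on[OF \<sigma>] ssmul_const_on[of "K \<sigma>"]
    unfolding bundle_endo_def by metis
  then show ?thesis
    using K unfolding bundle_endo_def sec_linear_def by blast
qed

end

section \<open>The nabla-bracket\<close>

locale manifold_connection = smooth_charts M A
  for M :: "'a topology" and A :: "('a set \<times> ('a \<Rightarrow> 'e::euclidean_space)) set" +
  fixes nabla :: "'a vf \<Rightarrow> 'a vf \<Rightarrow> 'a vf"
  assumes affine_connection: "affine_connection M A nabla"
begin

abbreviation bracket :: "'a gsec \<Rightarrow> 'a gsec \<Rightarrow> 'a gsec" where
  "bracket \<equiv> nabla_bracket M A nabla"

lemma vector_field_nabla [simp]:
  "vector_field M A X \<Longrightarrow> vector_field M A Y \<Longrightarrow> vector_field M A (nabla X Y)"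
  using affine_connection unfolding affine_connection_def by blast

lemma nabla_add_left [simp]:
  "vector_field M A X \<Longrightarrow> vector_field M A X' \<Longrightarrow> vector_field M A Y \<Longrightarrow>
     nabla (\<lambda>f x. X f x + X' f x) Y = (\<lambda>f x. nabla X Y f x + nabla X' Y f x)"
  using affine_connection unfolding affine_connection_def vf_add_def by blast

lemma nabla_add_right [simp]:
  "vector_field M A X \<Longrightarrow> vector_field M A Y \<Longrightarrow> vector_field M A Y' \<Longrightarrow>
     nabla X (\<lambda>f x. Y f x + Y' f x) = (\<lambda>f x. nabla X Y f x + nabla X Y' f x)"
  using affine_connection unfolding affine_connection_def vf_add_def by blast

lemma nabla_scale_left [simp]:
  "smooth_fun M A g \<Longrightarrow> vector_field M A X \<Longrightarrow> vector_field M A Y \<Longrightarrow>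
     nabla (\<lambda>f x. g x * X f x) Y = (\<lambda>f x. g x * nabla X Y f x)"
  using affine_connection unfolding affine_connection_def vf_smul_def by blast

lemma nabla_scale_right [simp]:
  "smooth_fun M A g \<Longrightarrow> vector_field M A X \<Longrightarrow> vector_field M A Y \<Longrightarrow>
     nabla X (\<lambda>f x. g x * Y f x) = (\<lambda>f x. X g x * Y f x + g x * nabla X Y f x)"
  using affine_connection unfolding affine_connection_def vf_smul_def vf_add_def by blast

lemma one_form_nabla_form [simp]:
  assumes X: "vector_field M A X" and \<eta>: "one_form M A \<eta>"
  shows "one_form M A (nabla_form M A nabla X \<eta>)"
proof -
  have "\<eta> (nabla X (\<lambda>f x. g x * Y f x)) = (\<lambda>x. X g x * \<eta> Y x + g x * \<eta> (nabla X Y) x)"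
    if "smooth_fun M A g" "vector_field M A Y" for g Y
    using one_form_add[OF \<eta>, of "\<lambda>f x. X g x * Y f x" "\<lambda>f x. g x * nabla X Y f x"] X \<eta> that
    by simp
  then show ?thesis
    unfolding one_form_def vf_add_def vf_smul_def
    using X \<eta> by (auto simp: nabla_form_def algebra_simps simp del: nabla_scale_right)
qed

lemma vector_field_apply_add:
  "vector_field M A Y \<Longrightarrow> vector_field M A X \<Longrightarrow> vector_field M A X' \<Longrightarrow>
     Y (\<lambda>x. X f x + X' f x) = (\<lambda>x. Y (X f) x + Y (X' f) x)"
  by (cases "smooth_fun M A f") (simp_all add: vector_field_nonsmooth)

lemma vector_field_apply_scale:
  "vector_field M A Y \<Longrightarrow> vector_field M A X \<Longrightarrow> smooth_fun M A g \<Longrightarrow>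
     Y (\<lambda>x. g x * X f x) = (\<lambda>x. g x * Y (X f) x + X f x * Y g x)"
  by (cases "smooth_fun M A f") (simp_all add: vector_field_nonsmooth)

lemma gsection_bracket [simp]:
  "gsection M A \<sigma> \<Longrightarrow> gsection M A \<tau> \<Longrightarrow> gsection M A (bracket \<sigma> \<tau>)"
  unfolding gsection_def nabla_bracket_def by simp

lemma bracket_antisym: "bracket \<sigma> \<tau> = sneg (bracket \<tau> \<sigma>)"
  by (simp add: gsec_eq_iff nabla_bracket_def sneg_def lie_def)

lemma bracket_sadd_left:
  assumes "gsection M A \<sigma>" "gsection M A \<sigma>'" "gsection M A \<tau>"
  shows "bracket (sadd \<sigma> \<sigma>') \<tau> = sadd (bracket \<sigma> \<tau>) (bracket \<sigma>' \<tau>)"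
  using assms
  by (auto simp: gsection_def gsec_eq_iff nabla_bracket_def sadd_def lie_def nabla_form_def
      vector_field_apply_add algebra_simps)

lemma bracket_ssmul_left:
  assumes g: "smooth_fun M A g" and "gsection M A \<sigma>" "gsection M A \<tau>"
  shows "bracket (ssmul g \<sigma>) \<tau> = ssub (ssmul g (bracket \<sigma> \<tau>)) (ssmul (fst \<tau> g) \<sigma>)"
  using assms one_form_nonvf[of "snd \<sigma>"]
  by (auto simp: gsection_def gsec_eq_iff nabla_bracket_def ssub_def ssmul_def lie_def nabla_form_def
      vector_field_apply_scale algebra_simps)

lemma bracket_srsmul_left:
  assumes \<sigma>: "gsection M A \<sigma>" and \<tau>: "gsection M A \<tau>"
  shows "bracket (srsmul c \<sigma>) \<tau> = srsmul c (bracket \<sigma> \<tau>)"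
proof -
  let ?c = "\<lambda>x. if x \<in> topspace M then c else 0"
  have "fst \<tau> ?c = (\<lambda>x. 0)"
    using \<tau> vector_field_const_on unfolding gsection_def by blast
  then show ?thesis
    using bracket_ssmul_left[OF smooth_fun_const_on \<sigma> \<tau>, of c] \<sigma> \<tau>
    by (simp add: ssmul_const_on) (simp add: gsec_ops)
qed

lemma bracket_sadd_right:
  "gsection M A \<sigma> \<Longrightarrow> gsection M A \<tau> \<Longrightarrow> gsection M A \<tau>' \<Longrightarrow>
     bracket \<sigma> (sadd \<tau> \<tau>') = sadd (bracket \<sigma> \<tau>) (bracket \<sigma> \<tau>')"
  using bracket_sadd_left[of \<tau> \<tau>' \<sigma>] bracket_antisym[of \<sigma>]
  by (simp add: gsec_eq_iff gsec_ops)

lemma bracket_ssmul_right: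
  "smooth_fun M A g \<Longrightarrow> gsection M A \<sigma> \<Longrightarrow> gsection M A \<tau> \<Longrightarrow>
     bracket \<sigma> (ssmul g \<tau>) = sadd (ssmul g (bracket \<sigma> \<tau>)) (ssmul (fst \<sigma> g) \<tau>)"
  using bracket_ssmul_left[of g \<tau> \<sigma>] bracket_antisym[of \<sigma>]
  by (simp add: gsec_eq_iff gsec_ops)

lemma bracket_srsmul_right:
  "gsection M A \<sigma> \<Longrightarrow> gsection M A \<tau> \<Longrightarrow> bracket \<sigma> (srsmul c \<tau>) = srsmul c (bracket \<sigma> \<tau>)"
  using bracket_srsmul_left[of \<tau> \<sigma> c] bracket_antisym[of \<sigma>]
  by (simp add: gsec_eq_iff gsec_ops)

lemma sec_linear_bracket_right: "gsection M A \<sigma> \<Longrightarrow> sec_linear (bracket \<sigma>)"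
  unfolding sec_linear_def by (simp add: bracket_sadd_right bracket_srsmul_right)

lemma sec_linear_bracket_left: "gsection M A \<tau> \<Longrightarrow> sec_linear (\<lambda>\<sigma>. bracket \<sigma> \<tau>)"
  unfolding sec_linear_def by (simp add: bracket_sadd_left bracket_srsmul_left)

lemma gen_torsion_antisym: "gen_torsion M A nabla D \<sigma> \<tau> = sneg (gen_torsion M A nabla D \<tau> \<sigma>)"
  using bracket_antisym[of \<sigma> \<tau>] by (simp add: gen_torsion_def gsec_eq_iff gsec_ops)

end

section \<open>The canonical connection\<close>

locale gen_para_quaternionic = manifold_connection M A nabla
  for M :: "'a topology" and A :: "('a set \<times> ('a \<Rightarrow> 'e::euclidean_space)) set"
    and nabla :: "'a vf \<Rightarrow> 'a vf \<Rightarrow> 'a vf" +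
  fixes J1 J2 :: "'a gsec \<Rightarrow> 'a gsec"
  assumes J1_almost_product: "gen_almost_product M A J1"
    and J2_almost_product: "gen_almost_product M A J2"
    and J1_J2_anticomm: "gsection M A \<sigma> \<Longrightarrow> J1 (J2 \<sigma>) = sneg (J2 (J1 \<sigma>))"
begin

lemma sec_linear_J1: "sec_linear J1"
  using J1_almost_product bundle_endo_sec_linear unfolding gen_almost_product_def by blast

lemma sec_linear_J2: "sec_linear J2"
  using J2_almost_product bundle_endo_sec_linear unfolding gen_almost_product_def by blast

lemma gsection_J1 [simp]: "gsection M A \<sigma> \<Longrightarrow> gsection M A (J1 \<sigma>)"
  using sec_linear_J1 sec_linear_gsection by blast

lemma gsection_J2 [simp]: "gsection M A \<sigma> \<Longrightarrow> gsection M A (J2 \<sigma>)"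
  using sec_linear_J2 sec_linear_gsection by blast

lemma J1_J1 [simp]: "gsection M A \<sigma> \<Longrightarrow> J1 (J1 \<sigma>) = \<sigma>"
  using J1_almost_product unfolding gen_almost_product_def by blast

lemma J2_J2 [simp]: "gsection M A \<sigma> \<Longrightarrow> J2 (J2 \<sigma>) = \<sigma>"
  using J2_almost_product unfolding gen_almost_product_def by blast

lemma J1_ssmul: "smooth_fun M A g \<Longrightarrow> gsection M A \<sigma> \<Longrightarrow> J1 (ssmul g \<sigma>) = ssmul g (J1 \<sigma>)"
  using J1_almost_product unfolding gen_almost_product_def bundle_endo_def by blast

lemma J2_ssmul: "smooth_fun M A g \<Longrightarrow> gsection M A \<sigma> \<Longrightarrow> J2 (ssmul g \<sigma>) = ssmul g (J2 \<sigma>)"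
  using J2_almost_product unfolding gen_almost_product_def bundle_endo_def by blast

text \<open>Replacing \<open>J1\<close> by \<open>-J1\<close> exchanges the roles of \<open>V1\<close> and \<open>V2\<close>; through the
  interpretation \<open>flip\<close> below, every result about \<open>V1\<close> yields its counterpart for \<open>V2\<close>.\<close>

lemma gen_para_quaternionic_flip: "gen_para_quaternionic M A nabla (\<lambda>\<sigma>. sneg (J1 \<sigma>)) J2"
proof unfold_locales
  show "gen_almost_product M A (\<lambda>\<sigma>. sneg (J1 \<sigma>))"
    using J1_almost_product sec_linear_sneg[OF sec_linear_J1]
    unfolding gen_almost_product_def bundle_endo_def
    by (simp add: J1_ssmul) (simp add: gsec_eq_iff gsec_ops)
  show "sneg (J1 (J2 \<sigma>)) = sneg (J2 (sneg (J1 \<sigma>)))" if "gsection M A \<sigma>" for \<sigma>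
    using that by (simp add: J1_J2_anticomm sec_linear_sneg[OF sec_linear_J2])
qed (use J2_almost_product affine_connection in simp_all)

definition V1 :: "'a gsec \<Rightarrow> bool" where
  "V1 \<sigma> \<longleftrightarrow> gsection M A \<sigma> \<and> J1 \<sigma> = \<sigma>"

definition V2 :: "'a gsec \<Rightarrow> bool" where
  "V2 \<sigma> \<longleftrightarrow> gsection M A \<sigma> \<and> J1 \<sigma> = sneg \<sigma>"

definition pr1 :: "'a gsec \<Rightarrow> 'a gsec" where
  "pr1 \<sigma> = srsmul (1/2) (sadd \<sigma> (J1 \<sigma>))"

definition pr2 :: "'a gsec \<Rightarrow> 'a gsec" where
  "pr2 \<sigma> = srsmul (1/2) (ssub \<sigma> (J1 \<sigma>))"

lemma sadd_pr1_pr2: "sadd (pr1 \<sigma>) (pr2 \<sigma>) = \<sigma>"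
  by (simp add: pr1_def pr2_def gsec_eq_iff gsec_ops algebra_simps)

lemma sec_linear_pr1: "sec_linear pr1"
  unfolding pr1_def[abs_def] by (intro sec_linear_scale sec_linear_sum sec_linear_id sec_linear_J1)

lemma sec_linear_pr2: "sec_linear pr2"
  unfolding pr2_def[abs_def] by (intro sec_linear_scale sec_linear_difference sec_linear_id sec_linear_J1)

lemma gsection_pr1 [simp]: "gsection M A \<sigma> \<Longrightarrow> gsection M A (pr1 \<sigma>)"
  by (simp add: pr1_def)

lemma gsection_pr2 [simp]: "gsection M A \<sigma> \<Longrightarrow> gsection M A (pr2 \<sigma>)"
  by (simp add: pr2_def)

lemma V1_gsection: "V1 \<sigma> \<Longrightarrow> gsection M A \<sigma>" and V2_gsection: "V2 \<sigma> \<Longrightarrow> gsection M A \<sigma>"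
  by (simp_all add: V1_def V2_def)

lemma J1_pr1: "gsection M A \<sigma> \<Longrightarrow> J1 (pr1 \<sigma>) = pr1 \<sigma>"
  by (simp add: pr1_def sec_linear_srsmul[OF sec_linear_J1] sec_linear_sadd[OF sec_linear_J1])
    (simp add: gsec_eq_iff gsec_ops algebra_simps)

lemma J1_pr2: "gsection M A \<sigma> \<Longrightarrow> J1 (pr2 \<sigma>) = sneg (pr2 \<sigma>)"
  by (simp add: pr2_def sec_linear_srsmul[OF sec_linear_J1] sec_linear_ssub[OF sec_linear_J1])
    (simp add: gsec_eq_iff gsec_ops algebra_simps)

lemma V1_pr1: "gsection M A \<sigma> \<Longrightarrow> V1 (pr1 \<sigma>)" and V2_pr2: "gsection M A \<sigma> \<Longrightarrow> V2 (pr2 \<sigma>)"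
  by (simp_all add: V1_def V2_def J1_pr1 J1_pr2)

lemma pr1_V1: "V1 \<sigma> \<Longrightarrow> pr1 \<sigma> = \<sigma>" and pr2_V1: "V1 \<sigma> \<Longrightarrow> pr2 \<sigma> = szero"
  and pr1_V2: "V2 \<sigma> \<Longrightarrow> pr1 \<sigma> = szero" and pr2_V2: "V2 \<sigma> \<Longrightarrow> pr2 \<sigma> = \<sigma>"
  by (auto simp: V1_def V2_def pr1_def pr2_def gsec_eq_iff gsec_ops)

lemma pr1_J1: "gsection M A \<sigma> \<Longrightarrow> pr1 (J1 \<sigma>) = pr1 \<sigma>"
  and pr2_J1: "gsection M A \<sigma> \<Longrightarrow> pr2 (J1 \<sigma>) = sneg (pr2 \<sigma>)"
  by (simp_all add: pr1_def pr2_def gsec_eq_iff gsec_ops algebra_simps)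

lemma pr1_J2: "gsection M A \<sigma> \<Longrightarrow> pr1 (J2 \<sigma>) = J2 (pr2 \<sigma>)"
  and pr2_J2: "gsection M A \<sigma> \<Longrightarrow> pr2 (J2 \<sigma>) = J2 (pr1 \<sigma>)"
  by (simp_all add: pr1_def pr2_def J1_J2_anticomm sec_linear_srsmul[OF sec_linear_J2]
      sec_linear_sadd[OF sec_linear_J2] sec_linear_ssub[OF sec_linear_J2])
    (simp_all add: gsec_eq_iff gsec_ops algebra_simps)

lemma pr1_ssmul: "smooth_fun M A g \<Longrightarrow> gsection M A \<sigma> \<Longrightarrow> pr1 (ssmul g \<sigma>) = ssmul g (pr1 \<sigma>)"
  and pr2_ssmul: "smooth_fun M A g \<Longrightarrow> gsection M A \<sigma> \<Longrightarrow> pr2 (ssmul g \<sigma>) = ssmul g (pr2 \<sigma>)"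
  by (simp_all add: pr1_def pr2_def J1_ssmul) (simp_all add: gsec_eq_iff gsec_ops algebra_simps)

lemma V2_J2: "V1 \<sigma> \<Longrightarrow> V2 (J2 \<sigma>)" and V1_J2: "V2 \<sigma> \<Longrightarrow> V1 (J2 \<sigma>)"
  by (auto simp: V1_def V2_def J1_J2_anticomm sec_linear_sneg[OF sec_linear_J2])

text \<open>The canonical derivative along a section \<open>a\<close> of \<open>V1\<close>: torsion-freeness forces
  \<open>D\<^sub>a b = pr2 [a, b]\<close> for \<open>b\<close> in \<open>V2\<close>, and \<open>J2\<close> transports this to \<open>V1 = J2 V2\<close>.\<close>

definition D1 :: "'a gsec \<Rightarrow> 'a gsec \<Rightarrow> 'a gsec" where
  "D1 a \<tau> = sadd (pr2 (bracket a (pr2 \<tau>))) (J2 (pr2 (bracket a (J2 (pr1 \<tau>)))))"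

lemma sec_linear_D1_right: "gsection M A a \<Longrightarrow> sec_linear (D1 a)"
  unfolding D1_def[abs_def]
  by (intro sec_linear_sum sec_linear_comp[OF sec_linear_J2] sec_linear_comp[OF sec_linear_pr2]
      sec_linear_comp[OF sec_linear_bracket_right] sec_linear_pr1 sec_linear_pr2) simp

lemma sec_linear_D1_left: "gsection M A \<tau> \<Longrightarrow> sec_linear (\<lambda>a. D1 a \<tau>)"
  unfolding D1_def
  by (intro sec_linear_sum sec_linear_comp[OF sec_linear_J2] sec_linear_comp[OF sec_linear_pr2]
      sec_linear_bracket_left) simp_all

lemma gsection_D1 [simp]: "gsection M A a \<Longrightarrow> gsection M A \<tau> \<Longrightarrow> gsection M A (D1 a \<tau>)"
  by (simp add: D1_def)

lemma D1_V2: "gsection M A a \<Longrightarrow> V2 b \<Longrightarrow> D1 a b = pr2 (bracket a b)"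
  using sec_linear_szero[OF sec_linear_bracket_right, of a] sec_linear_szero[OF sec_linear_pr2]
    sec_linear_szero[OF sec_linear_J2]
  by (simp add: D1_def pr1_V2 pr2_V2 V2_gsection)

lemma D1_ssmul_left:
  assumes g: "smooth_fun M A g" and a: "V1 a" and \<tau>: "gsection M A \<tau>"
  shows "D1 (ssmul g a) \<tau> = ssmul g (D1 a \<tau>)"
proof -
  have "pr2 (bracket (ssmul g a) \<rho>) = ssmul g (pr2 (bracket a \<rho>))" if "gsection M A \<rho>" for \<rho>
    using that g a V1_gsection[OF a] pr2_V1[OF a]
    by (simp add: bracket_ssmul_left sec_linear_ssub[OF sec_linear_pr2] pr2_ssmul)
  then show ?thesis
    using g \<tau> V1_gsection[OF a] by (simp add: D1_def J2_ssmul ssmul_sadd)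
qed

lemma D1_ssmul_right:
  assumes g: "smooth_fun M A g" and a: "gsection M A a" and \<tau>: "gsection M A \<tau>"
  shows "D1 a (ssmul g \<tau>) = sadd (ssmul (fst a g) \<tau>) (ssmul g (D1 a \<tau>))"
proof -
  have pr2_bracket:
    "pr2 (bracket a (ssmul g \<rho>)) = sadd (ssmul g (pr2 (bracket a \<rho>))) (ssmul (fst a g) (pr2 \<rho>))"
    if "gsection M A \<rho>" for \<rho>
    using that g a by (simp add: bracket_ssmul_right sec_linear_sadd[OF sec_linear_pr2] pr2_ssmul)
  have pr1_pr1: "pr1 (pr1 \<tau>) = pr1 \<tau>" and pr2_pr2: "pr2 (pr2 \<tau>) = pr2 \<tau>"
    using \<tau> by (simp_all add: pr1_V1 V1_pr1 pr2_V2 V2_pr2)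
  have V2_part: "pr2 (bracket a (pr2 (ssmul g \<tau>))) =
      sadd (ssmul g (pr2 (bracket a (pr2 \<tau>)))) (ssmul (fst a g) (pr2 \<tau>))"
    using g \<tau> pr2_bracket[of "pr2 \<tau>"] by (simp add: pr2_ssmul pr2_pr2)
  have V1_part: "J2 (pr2 (bracket a (J2 (pr1 (ssmul g \<tau>))))) =
      sadd (ssmul g (J2 (pr2 (bracket a (J2 (pr1 \<tau>)))))) (ssmul (fst a g) (pr1 \<tau>))"
    using g a \<tau> pr2_bracket[of "J2 (pr1 \<tau>)"]
    by (simp add: pr1_ssmul J2_ssmul sec_linear_sadd[OF sec_linear_J2] pr2_J2 pr1_pr1)
  have "ssmul (fst a g) \<tau> = sadd (ssmul (fst a g) (pr1 \<tau>)) (ssmul (fst a g) (pr2 \<tau>))"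
    by (metis sadd_pr1_pr2 ssmul_sadd)
  then show ?thesis
    unfolding D1_def V2_part V1_part by (simp add: gsec_eq_iff gsec_ops algebra_simps)
qed

lemma D1_J1:
  assumes a: "gsection M A a" and \<tau>: "gsection M A \<tau>"
  shows "D1 a (J1 \<tau>) = J1 (D1 a \<tau>)"
  using a \<tau>
  by (simp add: D1_def pr1_J1 pr2_J1 J1_pr2 J1_J2_anticomm sec_linear_sadd[OF sec_linear_J1]
      sec_linear_sneg[OF sec_linear_bracket_right] sec_linear_sneg[OF sec_linear_pr2]
      sec_linear_sneg[OF sec_linear_J2])

lemma D1_J2:
  assumes a: "gsection M A a" and \<tau>: "gsection M A \<tau>"
  shows "D1 a (J2 \<tau>) = J2 (D1 a \<tau>)"
  using a \<tau> by (simp add: D1_def pr1_J2 pr2_J2 sec_linear_sadd[OF sec_linear_J2] sadd_commute)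

lemma connection_along_V1_eq_D1:
  assumes D: "gen_affine_connection M A D"
    and D_J1: "\<And>\<sigma> \<tau>. gsection M A \<sigma> \<Longrightarrow> gsection M A \<tau> \<Longrightarrow> D \<sigma> (J1 \<tau>) = J1 (D \<sigma> \<tau>)"
    and D_J2: "\<And>\<sigma> \<tau>. gsection M A \<sigma> \<Longrightarrow> gsection M A \<tau> \<Longrightarrow> D \<sigma> (J2 \<tau>) = J2 (D \<sigma> \<tau>)"
    and torsion: "\<And>\<sigma> \<tau>. V1 \<sigma> \<Longrightarrow> V2 \<tau> \<Longrightarrow> gen_torsion M A nabla D \<sigma> \<tau> = szero"
    and a: "V1 a" and \<tau>: "gsection M A \<tau>"
  shows "D a \<tau> = D1 a \<tau>"
proof -
  have sa: "gsection M A a" using a by (rule V1_gsection)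
  have D_V2: "D a b = pr2 (bracket a b)" if b: "V2 b" for b
  proof -
    have sb: "gsection M A b" using b by (rule V2_gsection)
    have "J1 (D a b) = sneg (D a b)"
      using D_J1[OF sa sb] b gen_affine_connection_sneg_right[OF D sa sb] by (simp add: V2_def)
    then have "pr2 (D a b) = D a b"
      using gen_affine_connection_gsection[OF D sa sb] by (simp add: pr2_V2 V2_def)
    moreover have "J1 (D b a) = D b a"
      using D_J1[OF sb sa] a by (simp add: V1_def)
    then have "pr2 (D b a) = szero"
      using gen_affine_connection_gsection[OF D sb sa] by (simp add: pr2_V1 V1_def)
    moreover have "bracket a b = ssub (D a b) (D b a)"
      using torsion[OF a b] by (simp add: gen_torsion_def ssub_eq_szero_iff)
    ultimately show ?thesis
      using D sa sb by (simp add: sec_linear_ssub[OF sec_linear_pr2] gen_affine_connection_gsection)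
  qed
  have "D a (pr1 \<tau>) = J2 (pr2 (bracket a (J2 (pr1 \<tau>))))"
    using D_J2[OF sa, of "J2 (pr1 \<tau>)"] D_V2[OF V2_J2[OF V1_pr1[OF \<tau>]]] \<tau> by simp
  moreover have "D a \<tau> = sadd (D a (pr1 \<tau>)) (D a (pr2 \<tau>))"
    using gen_affine_connection_sadd_right[OF D sa, of "pr1 \<tau>" "pr2 \<tau>"] \<tau>
    by (simp add: sadd_pr1_pr2)
  ultimately show ?thesis
    using D_V2[OF V2_pr2[OF \<tau>]] by (simp add: D1_def sadd_commute)
qed

interpretation flip: gen_para_quaternionic M A nabla "\<lambda>\<sigma>. sneg (J1 \<sigma>)" J2
  by (rule gen_para_quaternionic_flip)

lemma flip_V1: "flip.V1 = V2" and flip_V2: "flip.V2 = V1"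
  by (auto simp: fun_eq_iff flip.V1_def flip.V2_def V1_def V2_def sneg_eq_iff)

lemma flip_pr1: "flip.pr1 = pr2" and flip_pr2: "flip.pr2 = pr1"
  by (simp_all add: fun_eq_iff flip.pr1_def flip.pr2_def pr1_def pr2_def) (simp_all add: gsec_ops)

lemma flip_D1_J1:
  assumes a: "gsection M A a" and \<tau>: "gsection M A \<tau>"
  shows "flip.D1 a (J1 \<tau>) = J1 (flip.D1 a \<tau>)"
  using flip.D1_J1[OF a \<tau>] sec_linear_sneg[OF flip.sec_linear_D1_right[OF a], of "J1 \<tau>"] \<tau>
  by (metis gsection_J1 sneg_sneg)

definition canonical_connection :: "'a gsec \<Rightarrow> 'a gsec \<Rightarrow> 'a gsec" where
  "canonical_connection \<sigma> \<tau> =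
     (if gsection M A \<sigma> \<and> gsection M A \<tau> then sadd (D1 (pr1 \<sigma>) \<tau>) (flip.D1 (pr2 \<sigma>) \<tau>) else szero)"

lemma canonical_connection_eq:
  "gsection M A \<sigma> \<Longrightarrow> gsection M A \<tau> \<Longrightarrow>
     canonical_connection \<sigma> \<tau> = sadd (D1 (pr1 \<sigma>) \<tau>) (flip.D1 (pr2 \<sigma>) \<tau>)"
  by (simp add: canonical_connection_def)

lemma gen_affine_connection_canonical: "gen_affine_connection M A canonical_connection"
proof -
  have left: "sec_linear (\<lambda>\<sigma>. sadd (D1 (pr1 \<sigma>) \<tau>) (flip.D1 (pr2 \<sigma>) \<tau>))" if "gsection M A \<tau>" for \<tau>
    using sec_linear_comp[OF sec_linear_D1_left[OF that] sec_linear_pr1]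
      sec_linear_comp[OF flip.sec_linear_D1_left[OF that] sec_linear_pr2]
    by (rule sec_linear_sum)
  have right: "sec_linear (\<lambda>\<tau>. sadd (D1 (pr1 \<sigma>) \<tau>) (flip.D1 (pr2 \<sigma>) \<tau>))" if "gsection M A \<sigma>" for \<sigma>
    using that by (intro sec_linear_sum sec_linear_D1_right flip.sec_linear_D1_right) simp_all
  have smul_left: "canonical_connection (ssmul g \<sigma>) \<tau> = ssmul g (canonical_connection \<sigma> \<tau>)"
    if "smooth_fun M A g" "gsection M A \<sigma>" "gsection M A \<tau>" for g \<sigma> \<tau>
    using that V1_pr1[of \<sigma>] V2_pr2[of \<sigma>]
    by (simp add: canonical_connection_eq pr1_ssmul pr2_ssmul D1_ssmul_left flip.D1_ssmul_left
        flip_V1 ssmul_sadd)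
  have smul_right: "canonical_connection \<sigma> (ssmul g \<tau>) =
      sadd (ssmul (fst \<sigma> g) \<tau>) (ssmul g (canonical_connection \<sigma> \<tau>))"
    if "smooth_fun M A g" "gsection M A \<sigma>" "gsection M A \<tau>" for g \<sigma> \<tau>
  proof -
    have "fst \<sigma> g x = fst (pr1 \<sigma>) g x + fst (pr2 \<sigma>) g x" for x
      using arg_cong[OF sadd_pr1_pr2[of \<sigma>], of "\<lambda>\<rho>. fst \<rho> g x"] by (simp add: sadd_def)
    then show ?thesis
      using that
      by (simp add: canonical_connection_eq D1_ssmul_right flip.D1_ssmul_right)
        (simp add: gsec_eq_iff gsec_ops algebra_simps)
  qed
  show ?thesis
    unfolding gen_affine_connection_def
    using sec_linear_gsection[OF left] sec_linear_sadd[OF left] sec_linear_srsmul[OF left]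
      sec_linear_sadd[OF right] sec_linear_srsmul[OF right] smul_left smul_right
    by (simp add: canonical_connection_eq) (auto simp: canonical_connection_def)
qed

lemma canonical_connection_J1:
  "gsection M A \<sigma> \<Longrightarrow> gsection M A \<tau> \<Longrightarrow>
     canonical_connection \<sigma> (J1 \<tau>) = J1 (canonical_connection \<sigma> \<tau>)"
  by (simp add: canonical_connection_eq D1_J1 flip_D1_J1 sec_linear_sadd[OF sec_linear_J1])

lemma canonical_connection_J2:
  "gsection M A \<sigma> \<Longrightarrow> gsection M A \<tau> \<Longrightarrow>
     canonical_connection \<sigma> (J2 \<tau>) = J2 (canonical_connection \<sigma> \<tau>)"
  by (simp add: canonical_connection_eq D1_J2 flip.D1_J2 sec_linear_sadd[OF sec_linear_J2])

lemma canonical_connection_torsion: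
  assumes \<sigma>: "V1 \<sigma>" and \<tau>: "V2 \<tau>"
  shows "gen_torsion M A nabla canonical_connection \<sigma> \<tau> = szero"
proof -
  have s: "gsection M A \<sigma>" "gsection M A \<tau>"
    using \<sigma> \<tau> by (simp_all add: V1_gsection V2_gsection)
  have "canonical_connection \<sigma> \<tau> = pr2 (bracket \<sigma> \<tau>)"
    using s \<sigma> \<tau> sec_linear_szero[OF flip.sec_linear_D1_left[OF s(2)]]
    by (simp add: canonical_connection_eq pr1_V1 pr2_V1 D1_V2)
  moreover have "canonical_connection \<tau> \<sigma> = sneg (pr1 (bracket \<sigma> \<tau>))"
    using s \<sigma> \<tau> sec_linear_szero[OF sec_linear_D1_left[OF s(1)]] flip.D1_V2[of \<tau> \<sigma>]
      bracket_antisym[of \<tau> \<sigma>] sec_linear_sneg[OF sec_linear_pr1]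
    by (simp add: canonical_connection_eq pr1_V2 pr2_V2 flip_V2 flip_pr2)
  ultimately show ?thesis
    using sadd_pr1_pr2[of "bracket \<sigma> \<tau>"]
    by (simp add: gen_torsion_def) (simp add: gsec_eq_iff gsec_ops algebra_simps)
qed

lemma canonical_connection_unique:
  assumes D: "gen_affine_connection M A D"
    and D_J1: "\<And>\<sigma> \<tau>. gsection M A \<sigma> \<Longrightarrow> gsection M A \<tau> \<Longrightarrow> D \<sigma> (J1 \<tau>) = J1 (D \<sigma> \<tau>)"
    and D_J2: "\<And>\<sigma> \<tau>. gsection M A \<sigma> \<Longrightarrow> gsection M A \<tau> \<Longrightarrow> D \<sigma> (J2 \<tau>) = J2 (D \<sigma> \<tau>)"
    and torsion: "\<And>\<sigma> \<tau>. V1 \<sigma> \<Longrightarrow> V2 \<tau> \<Longrightarrow> gen_torsion M A nabla D \<sigma> \<tau> = szero"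
  shows "D = canonical_connection"
proof (intro ext)
  fix \<sigma> \<tau>
  show "D \<sigma> \<tau> = canonical_connection \<sigma> \<tau>"
  proof (cases "gsection M A \<sigma> \<and> gsection M A \<tau>")
    case False
    show ?thesis
      unfolding canonical_connection_def if_not_P[OF False]
      by (rule gen_affine_connection_nonsection[OF D False])
  next
    case True
    have "D (pr1 \<sigma>) \<tau> = D1 (pr1 \<sigma>) \<tau>"
      using True by (intro connection_along_V1_eq_D1[OF D D_J1 D_J2 torsion] V1_pr1) simp_all
    moreover have "D (pr2 \<sigma>) \<tau> = flip.D1 (pr2 \<sigma>) \<tau>"
    proof (rule flip.connection_along_V1_eq_D1[OF D])
      show "D \<rho> (sneg (J1 \<rho>')) = sneg (J1 (D \<rho> \<rho>'))"
        if "gsection M A \<rho>" "gsection M A \<rho>'" for \<rho> \<rho>'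
        using that by (simp add: gen_affine_connection_sneg_right[OF D] D_J1)
      show "gen_torsion M A nabla D \<rho> \<rho>' = szero" if "flip.V1 \<rho>" "flip.V2 \<rho>'" for \<rho> \<rho>'
        using that torsion gen_torsion_antisym[of D \<rho> \<rho>'] by (simp add: flip_V1 flip_V2)
    qed (use True D_J2 in \<open>simp_all add: flip_V1 V2_pr2\<close>)
    ultimately show ?thesis
      using True gen_affine_connection_sadd_left[OF D, of "pr1 \<sigma>" "pr2 \<sigma>" \<tau>]
      by (simp add: sadd_pr1_pr2 canonical_connection_eq)
  qed
qed

end

theorem theorem5p3:
  fixes M :: "'a topology"
    and A :: "('a set \<times> ('a \<Rightarrow> 'e::euclidean_space)) set"
    and nabla :: "'a vf \<Rightarrow> 'a vf \<Rightarrow> 'a vf"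
    and J1 J2 :: "'a gsec \<Rightarrow> 'a gsec"
  assumes "smooth_manifold M A"
    and "affine_connection M A nabla"
    and "gen_almost_product M A J1"
    and "gen_almost_product M A J2"
    and "\<forall>\<sigma>. gsection M A \<sigma> \<longrightarrow> J1 (J2 \<sigma>) = sneg (J2 (J1 \<sigma>))"
  shows "\<exists>!D. gen_affine_connection M A D \<and>
           (\<forall>\<sigma> \<tau>. gsection M A \<sigma> \<longrightarrow> gsection M A \<tau> \<longrightarrow>
               cov_endo D J1 \<sigma> \<tau> = szero \<and>
               cov_endo D J2 \<sigma> \<tau> = szero \<and>
               cov_endo D (J1 \<circ> J2) \<sigma> \<tau> = szero) \<and>
           (\<forall>\<sigma> \<tau>. gsection M A \<sigma> \<longrightarrow> J1 \<sigma> = \<sigma> \<longrightarrow>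
                   gsection M A \<tau> \<longrightarrow> J1 \<tau> = sneg \<tau> \<longrightarrow>
               gen_torsion M A nabla D \<sigma> \<tau> = szero)"
proof -
  interpret gen_para_quaternionic M A nabla J1 J2
    using assms smooth_manifold_imp_smooth_charts
    by (simp add: gen_para_quaternionic_def gen_para_quaternionic_axioms_def
        manifold_connection_def manifold_connection_axioms_def)
  have cov_endo_iff: "cov_endo D J \<sigma> \<tau> = szero \<longleftrightarrow> D \<sigma> (J \<tau>) = J (D \<sigma> \<tau>)"
    for D :: "'a gsec \<Rightarrow> 'a gsec \<Rightarrow> 'a gsec" and J \<sigma> \<tau>
    by (simp add: cov_endo_def ssub_eq_szero_iff)
  show ?thesis
    by (rule ex1I[of _ canonical_connection])
      (auto simp: cov_endo_iff V1_def V2_def gen_affine_connection_canonical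
        canonical_connection_J1 canonical_connection_J2 canonical_connection_torsion
        intro!: canonical_connection_unique)
qed

end
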